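(* Let $\mathcal F=(f_t)$ be a continuous flow on a compact metric space $X$, $\varphi\colon X\to\mathbb{R}$ continuous, and $\lambda\colon X\to[0,\infty)$ bounded and lower semicontinuous. For $\eta>0$ let $B(\eta)=\{(x,t)\in X\times[0,\infty): \frac1t\int_0^t\lambda(f_sx)\,ds\le\eta\}$. Then for every $\eta>0$ and every $\varepsilon>0$, $P([B(\eta)],\varphi)\le P(B(\eta+\varepsilon),\varphi)$.
   Context: For $\mathcal C\subset X\times[0,\infty)$, $[\mathcal C]=\{(x,n)\in X\times\mathbb N: (f_{-s}x,n+s+t)\in\mathcal C\text{ for some }s,t\in[0,1]\}$. For a collection $\mathcal C$ of orbit segments, with $\mathcal C_t=\{x:(x,t)\in\mathcal C\}$: $\Lambda_t(\mathcal C,\varphi,\varepsilon)=\sup\{\sum_{x\in E}e^{\int_0^t\varphi(f_sx)ds}: E\subset\mathcal C_t\ (t,\varepsilon)\text{-separated}\}$, $P(\mathcal C,\varphi,\varepsilon)=\limsup_{t\to\infty}\frac1t\log\Lambda_t(\mathcal C,\varphi,\varepsilon)$, $P(\mathcal C,\varphi)=\lim_{\varepsilon\to0}P(\mathcal C,\varphi,\varepsilon)$. *)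

theory Defs
  imports "HOL-Analysis.Analysis"
begin

definition continuous_flow :: "'a::metric_space set \<Rightarrow> (real \<Rightarrow> 'a \<Rightarrow> 'a) \<Rightarrow> bool" where
  "continuous_flow X f \<longleftrightarrow>
     (\<forall>t. \<forall>x\<in>X. f t x \<in> X) \<and>
     (\<forall>x\<in>X. f 0 x = x) \<and>
     (\<forall>s t. \<forall>x\<in>X. f (s + t) x = f s (f t x)) \<and>
     continuous_on (UNIV \<times> X) (\<lambda>(t, x). f t x)"

definition lsc_on :: "'a::topological_space set \<Rightarrow> ('a \<Rightarrow> real) \<Rightarrow> bool" where
  "lsc_on X g \<longleftrightarrow> (\<forall>a. openin (top_of_set X) {x\<in>X. a < g x})"

definition bowen_dist :: "(real \<Rightarrow> 'a \<Rightarrow> 'a) \<Rightarrow> real \<Rightarrow> 'a::metric_space \<Rightarrow> 'a \<Rightarrow> real" where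
  "bowen_dist f t x y = (SUP s\<in>{0..t}. dist (f s x) (f s y))"

definition separated :: "(real \<Rightarrow> 'a \<Rightarrow> 'a) \<Rightarrow> real \<Rightarrow> real \<Rightarrow> 'a::metric_space set \<Rightarrow> bool" where
  "separated f t \<epsilon> E \<longleftrightarrow> (\<forall>x\<in>E. \<forall>y\<in>E. x \<noteq> y \<longrightarrow> bowen_dist f t x y > \<epsilon>)"

definition slice :: "('a \<times> real) set \<Rightarrow> real \<Rightarrow> 'a set" where
  "slice C t = {x. (x, t) \<in> C}"

text \<open>Lambda_t(C, phi, eps) (in the extended reals; separated sets in a compact
  space are finite, so the supremum is over finite separated subsets).\<close>
definition Lambda :: "(real \<Rightarrow> 'a::metric_space \<Rightarrow> 'a) \<Rightarrow> ('a \<times> real) set \<Rightarrow> ('a \<Rightarrow> real) \<Rightarrow> real \<Rightarrow> real \<Rightarrow> ereal" where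
  "Lambda f C \<phi> \<epsilon> t =
     (SUP E\<in>{E. finite E \<and> E \<subseteq> slice C t \<and> separated f t \<epsilon> E}.
        ereal (\<Sum>x\<in>E. exp (integral {0..t} (\<lambda>s. \<phi> (f s x)))))"

definition eln :: "ereal \<Rightarrow> ereal" where
  "eln a = (if a \<le> 0 then -\<infinity> else if a = \<infinity> then \<infinity> else ereal (ln (real_of_ereal a)))"

definition pressure_eps :: "(real \<Rightarrow> 'a::metric_space \<Rightarrow> 'a) \<Rightarrow> ('a \<times> real) set \<Rightarrow> ('a \<Rightarrow> real) \<Rightarrow> real \<Rightarrow> ereal" where
  "pressure_eps f C \<phi> \<epsilon> = Limsup at_top (\<lambda>t. eln (Lambda f C \<phi> \<epsilon> t) / ereal t)"

definition pressure :: "(real \<Rightarrow> 'a::metric_space \<Rightarrow> 'a) \<Rightarrow> ('a \<times> real) set \<Rightarrow> ('a \<Rightarrow> real) \<Rightarrow> ereal" where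
  "pressure f C \<phi> = Lim (at_right 0) (\<lambda>\<epsilon>. pressure_eps f C \<phi> \<epsilon>)"

text \<open>[C]: orbit segments with integer length obtained by trimming at most 1 from each end.\<close>
definition discretize :: "'a set \<Rightarrow> (real \<Rightarrow> 'a \<Rightarrow> 'a) \<Rightarrow> ('a \<times> real) set \<Rightarrow> ('a \<times> real) set" where
  "discretize X f C = {(x, real n) | x n. x \<in> X \<and> (\<exists>s\<in>{0..1}. \<exists>t\<in>{0..1}. (f (- s) x, real n + s + t) \<in> C)}"

definition Bset :: "'a set \<Rightarrow> (real \<Rightarrow> 'a \<Rightarrow> 'a) \<Rightarrow> ('a \<Rightarrow> real) \<Rightarrow> real \<Rightarrow> ('a \<times> real) set" where
  "Bset X f lam \<eta> = {(x, t). x \<in> X \<and> 0 \<le> t \<and> (1 / t) * integral {0..t} (\<lambda>s. lam (f s x)) \<le> \<eta>}"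

end

theory Submission
  imports Defs
begin

text \<open>Trimming at most 1 from each end of an orbit segment of length \<open>n + s + t\<close> can only
  lower the integral of the nonnegative function \<open>\<lambda>\<close>, while the length drops by at most 2.
  So if the average over the long segment is at most \<open>\<eta>\<close>, the average over the trimmed segment
  of length \<open>n\<close> is at most \<open>\<eta> (n + 2) / n \<le> \<eta> + \<epsilon>\<close> as soon as \<open>n \<ge> 2\<eta>/\<epsilon>\<close>. Thus for all large
  times every slice of \<open>[B(\<eta>)]\<close> lies in the corresponding slice of \<open>B(\<eta> + \<epsilon>)\<close>, and pressure is
  monotone under eventual inclusion of slices.\<close>

lemma continuous_flow_orbit_continuous:
  assumes "continuous_flow X f" "x \<in> X"
  shows "continuous_on UNIV (\<lambda>t. f t x)"
proof -
  have "continuous_on UNIV ((\<lambda>(t, x). f t x) \<circ> (\<lambda>t. (t, x)))"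
    using assms unfolding continuous_flow_def
    by (intro continuous_on_compose continuous_intros) (auto elim: continuous_on_subset)
  then show ?thesis
    by (simp add: o_def)
qed

lemma continuous_flow_inverse:
  assumes "continuous_flow X f" "x \<in> X"
  shows "f s (f (- s) x) = x"
  using assms unfolding continuous_flow_def by (metis add.right_inverse)

lemma lsc_on_compose:
  assumes "lsc_on X g" "continuous_on S h" "h ` S \<subseteq> X"
  shows "lsc_on S (g \<circ> h)"
  unfolding lsc_on_def
proof
  fix a
  have "openin (top_of_set S) (S \<inter> h -` {y \<in> X. a < g y})"
    using assms continuous_on_open_gen[of h S X] unfolding lsc_on_def by blast
  moreover have "S \<inter> h -` {y \<in> X. a < g y} = {x \<in> S. a < (g \<circ> h) x}"
    using assms(3) by auto
  ultimately show "openin (top_of_set S) {x \<in> S. a < (g \<circ> h) x}"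
    by simp
qed

lemma lsc_on_UNIV_borel_measurable:
  assumes "lsc_on UNIV g"
  shows "g \<in> borel_measurable borel"
  using assms unfolding borel_measurable_iff_greater lsc_on_def by simp

lemma lsc_on_UNIV_bounded_integrable_on:
  fixes g :: "'a::euclidean_space \<Rightarrow> real"
  assumes "lsc_on UNIV g" "bounded (range g)"
  shows "g integrable_on cbox a b"
proof -
  obtain B where "\<And>x. norm (g x) \<le> B"
    using assms(2) unfolding bounded_iff by blast
  moreover have "g \<in> borel_measurable (lebesgue_on (cbox a b))"
    using lsc_on_UNIV_borel_measurable[OF assms(1)]
    by (simp add: measurable_completion measurable_restrict_space1)
  ultimately show ?thesis
    using measurable_bounded_by_integrable_imp_integrable[of g "cbox a b" "\<lambda>_. B"]
    by (simp add: integrable_const)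
qed

lemma orbit_integrable_on:
  assumes "continuous_flow X f" "x \<in> X" "lsc_on X lam" "bounded (lam ` X)"
  shows "(\<lambda>t. lam (f t x)) integrable_on {a..b}"
proof -
  have orbit_in: "range (\<lambda>t. f t x) \<subseteq> X"
    using assms(1,2) unfolding continuous_flow_def by blast
  have "lsc_on UNIV (lam \<circ> (\<lambda>t. f t x))"
    using assms(3) continuous_flow_orbit_continuous[OF assms(1,2)] orbit_in
    by (rule lsc_on_compose)
  moreover have "bounded (range (lam \<circ> (\<lambda>t. f t x)))"
    using assms(4) orbit_in by (auto simp: image_comp[symmetric] intro: bounded_subset)
  ultimately show ?thesis
    using lsc_on_UNIV_bounded_integrable_on[of _ a b] by (simp add: o_def)
qed

lemma trimmed_average_le:
  fixes g :: "real \<Rightarrow> real"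
  assumes "g integrable_on {0..n + s + t}" "\<And>u. u \<in> {0..n + s + t} \<Longrightarrow> 0 \<le> g u"
    and "s \<in> {0..1}" "t \<in> {0..1}" "0 < n" "0 \<le> \<eta>" "2 * \<eta> \<le> \<epsilon> * n"
    and "(1 / (n + s + t)) * integral {0..n + s + t} g \<le> \<eta>"
  shows "(1 / n) * integral {s..n + s} g \<le> \<eta> + \<epsilon>"
proof -
  have "integral {s..n + s} g \<le> integral {0..n + s + t} g"
    using assms(1-4) by (intro integral_subset_le) (auto intro: integrable_subinterval_real)
  also have "\<dots> \<le> \<eta> * (n + s + t)"
    using assms(3-5,8) by (simp add: field_simps)
  also have "\<dots> \<le> \<eta> * (n + 2)"
    using assms(3,4,6) by (intro mult_left_mono) auto
  also have "\<dots> \<le> (\<eta> + \<epsilon>) * n"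
    using assms(7) by (simp add: algebra_simps)
  finally show ?thesis
    using assms(5) by (simp add: field_simps)
qed

lemma slice_discretize_Bset_subset:
  assumes flow: "continuous_flow X f"
    and "\<forall>x\<in>X. 0 \<le> lam x" "bounded (lam ` X)" "lsc_on X lam"
    and "0 \<le> \<eta>" "1 \<le> T" "2 * \<eta> \<le> \<epsilon> * T"
  shows "slice (discretize X f (Bset X f lam \<eta>)) T \<subseteq> slice (Bset X f lam (\<eta> + \<epsilon>)) T"
proof
  fix x
  assume "x \<in> slice (discretize X f (Bset X f lam \<eta>)) T"
  then obtain n s t where x: "x \<in> X" and T: "T = real n" and st: "s \<in> {0..1}" "t \<in> {0..1}"
    and y_in_B: "(f (- s) x, real n + s + t) \<in> Bset X f lam \<eta>"
    unfolding slice_def discretize_def by blast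
  define y where "y = f (- s) x"
  have y: "y \<in> X"
    using flow x unfolding y_def continuous_flow_def by blast
  have "f u x = f (s + u) y" for u
    using flow y continuous_flow_inverse[OF flow x, of s]
    unfolding y_def continuous_flow_def by (metis add.commute)
  then have "integral {0..T} (\<lambda>u. lam (f u x)) = integral {s..T + s} (\<lambda>u. lam (f u y))"
    using integral_shift_Icc_real[where f = "\<lambda>u. lam (f u y)" and a = 0 and b = T and c = s] by (simp add: o_def)
  also have "(1 / T) * \<dots> \<le> \<eta> + \<epsilon>"
    using assms(2,5-7) y_in_B st flow y orbit_integrable_on[OF flow y assms(4,3)]
    unfolding T y_def[symmetric] Bset_def continuous_flow_def
    by (intro trimmed_average_le[where t = t]) auto
  finally show "x \<in> slice (Bset X f lam (\<eta> + \<epsilon>)) T"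
    using x assms(6) unfolding slice_def Bset_def by auto
qed

lemma Lambda_mono:
  assumes "slice C1 t \<subseteq> slice C2 t" "e1 \<le> e2"
  shows "Lambda f C1 \<phi> e2 t \<le> Lambda f C2 \<phi> e1 t"
  unfolding Lambda_def
proof (rule SUP_subset_mono)
  have "separated f t e1 E" if "separated f t e2 E" for E
    using that assms(2) unfolding separated_def by (meson order_le_less_trans)
  then show "{E. finite E \<and> E \<subseteq> slice C1 t \<and> separated f t e2 E}
      \<subseteq> {E. finite E \<and> E \<subseteq> slice C2 t \<and> separated f t e1 E}"
    using assms(1) by blast
qed simp

lemma eln_mono: "a \<le> b \<Longrightarrow> eln a \<le> eln b"
  unfolding eln_def by (cases a; cases b) auto

lemma pressure_eps_mono:
  assumes "\<forall>\<^sub>F t in at_top. slice C1 t \<subseteq> slice C2 t" "e1 \<le> e2"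
  shows "pressure_eps f C1 \<phi> e2 \<le> pressure_eps f C2 \<phi> e1"
  unfolding pressure_eps_def
proof (rule Limsup_mono)
  show "\<forall>\<^sub>F t in at_top. eln (Lambda f C1 \<phi> e2 t) / ereal t \<le> eln (Lambda f C2 \<phi> e1 t) / ereal t"
    using assms(1) eventually_gt_at_top[of 0]
  proof eventually_elim
    case (elim t)
    then show ?case
      using assms(2) by (intro ereal_divide_right_mono eln_mono Lambda_mono) auto
  qed
qed

lemma pressure_eq_SUP: "pressure f C \<phi> = (SUP e\<in>{0<..}. pressure_eps f C \<phi> e)"
  unfolding pressure_def
proof (rule tendsto_Lim)
  show "((\<lambda>e. pressure_eps f C \<phi> e) \<longlongrightarrow> (SUP e\<in>{0<..}. pressure_eps f C \<phi> e)) (at_right 0)"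
  proof (rule increasing_tendsto)
    show "\<forall>\<^sub>F e in at_right 0. pressure_eps f C \<phi> e \<le> (SUP e\<in>{0<..}. pressure_eps f C \<phi> e)"
      using eventually_at_right_less[of 0] by eventually_elim (simp add: SUP_upper)
  next
    fix y
    assume "y < (SUP e\<in>{0<..}. pressure_eps f C \<phi> e)"
    then obtain e0 where e0: "0 < e0" "y < pressure_eps f C \<phi> e0"
      by (auto simp: less_SUP_iff)
    show "\<forall>\<^sub>F e in at_right 0. y < pressure_eps f C \<phi> e"
      using eventually_at_right_real[OF e0(1)]
    proof eventually_elim
      case (elim e)
      then have "pressure_eps f C \<phi> e0 \<le> pressure_eps f C \<phi> e"
        by (intro pressure_eps_mono) auto
      with e0(2) show ?case
        by (rule less_le_trans)
    qed
  qed
qed simp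

lemma pressure_mono:
  assumes "\<forall>\<^sub>F t in at_top. slice C1 t \<subseteq> slice C2 t"
  shows "pressure f C1 \<phi> \<le> pressure f C2 \<phi>"
  unfolding pressure_eq_SUP
  by (rule SUP_mono) (use assms pressure_eps_mono in blast)

theorem lemma3p5:
  fixes X :: "'a::metric_space set" and f :: "real \<Rightarrow> 'a \<Rightarrow> 'a"
    and \<phi> lam :: "'a \<Rightarrow> real" and \<eta> \<epsilon> :: real
  assumes "compact X"
    and "continuous_flow X f"
    and "continuous_on X \<phi>"
    and "\<forall>x\<in>X. 0 \<le> lam x" and "bounded (lam ` X)" and "lsc_on X lam"
    and "\<eta> > 0" and "\<epsilon> > 0"
  shows "pressure f (discretize X f (Bset X f lam \<eta>)) \<phi> \<le> pressure f (Bset X f lam (\<eta> + \<epsilon>)) \<phi>"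
proof (rule pressure_mono)
  show "\<forall>\<^sub>F T in at_top. slice (discretize X f (Bset X f lam \<eta>)) T \<subseteq> slice (Bset X f lam (\<eta> + \<epsilon>)) T"
    using eventually_ge_at_top[of "max 1 (2 * \<eta> / \<epsilon>)"]
  proof eventually_elim
    case (elim T)
    then have "1 \<le> T" "2 * \<eta> \<le> \<epsilon> * T"
      using \<open>\<epsilon> > 0\<close> by (auto simp: field_simps)
    then show ?case
      using assms(2,4-7) by (intro slice_discretize_Bset_subset) auto
  qed
qed

end
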